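(* $(\overline{\mathcal{D}},\overline{\delta},\overline{\varepsilon})$ is a comonad on $\mathsf{CLAC}$.
   Context: Composition in diagrammatic order. A Cartesian left additive category: category with finite products, hom-sets commutative monoids with $f(g+h)=fg+fh$, $f0=0$, projections additive. $\mathsf{CLAC}$: Cartesian left additive categories and functors preserving finite products strictly ($\mathsf{F}(A\times B)=\mathsf{F}A\times\mathsf{F}B$, terminal object, $\mathsf{F}(\pi_j)=\pi_j$) and $+$, $0$. Let $\mathsf{P}(A)=A\times A$, $\mathsf{P}(f)=f\times f$. A pre-$\mathsf{D}$-sequence $f_\bullet:A\to B$ is $(f_n)_{n\ge0}$ with $f_n:\mathsf{P}^n(A)\to B$. $\mathsf{T}(f_\bullet)_n=\langle\mathsf{P}^n(\pi_0)f_n,f_{n+1}\rangle$ (a sequence $\mathsf{P}(A)\to\mathsf{P}(B)$); $\mathsf{D}[f_\bullet]_n=f_{n+1}$. $\overline{\mathcal{D}}[\mathbb{X}]$: objects of $\mathbb{X}$, pre-$\mathsf{D}$-sequences, identity $i_0=1$, $i_n=\pi_1\cdots\pi_1$, composition $(f_\bullet\ast g_\bullet)_n=\mathsf{T}^n(f_\bullet)_0g_n$, finite products (projections $i_\bullet\cdot\pi_j$, $(i_\bullet\cdot\pi_j)_n=i_n\pi_j$; pairing $\langle f_n,g_n\rangle$; terminal object of $\mathbb{X}$), addition $0_n=0$, $(f_\bullet+g_\bullet)_n=f_n+g_n$. $\overline{\mathcal{D}}[\mathsf{F}](f_\bullet)_n=\mathsf{F}(f_n)$. $\overline{\varepsilon}(f_\bullet)=f_0$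 (identity on objects). $\overline{\delta}(f_\bullet)$ is the sequence of $\overline{\mathcal{D}}[\mathbb{X}]$ with $0$-th term $f_\bullet$ and $n$-th term $\mathsf{D}^n[f_\bullet]$ (identity on objects). *)

theory Defs
  imports Main
begin

text \<open>Operations carry their (co)domain objects as arguments; composition is diagrammatic:
  cComp A B C f g is "f then g" for f : A -> B and g : B -> C.\<close>

record ('o, 'a) clac_sig =
  cOb   :: "'o set"
  cHom  :: "'o \<Rightarrow> 'o \<Rightarrow> 'a set"
  cId   :: "'o \<Rightarrow> 'a"
  cComp :: "'o \<Rightarrow> 'o \<Rightarrow> 'o \<Rightarrow> 'a \<Rightarrow> 'a \<Rightarrow> 'a"
  cProd :: "'o \<Rightarrow> 'o \<Rightarrow> 'o"
  cPi0  :: "'o \<Rightarrow> 'o \<Rightarrow> 'a"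
  cPi1  :: "'o \<Rightarrow> 'o \<Rightarrow> 'a"
  cPair :: "'o \<Rightarrow> 'o \<Rightarrow> 'o \<Rightarrow> 'a \<Rightarrow> 'a \<Rightarrow> 'a"
  cTerm :: "'o"
  cBang :: "'o \<Rightarrow> 'a"
  cAdd  :: "'o \<Rightarrow> 'o \<Rightarrow> 'a \<Rightarrow> 'a \<Rightarrow> 'a"
  cZero :: "'o \<Rightarrow> 'o \<Rightarrow> 'a"

definition is_category :: "('o, 'a, 'z) clac_sig_scheme \<Rightarrow> bool" where
  "is_category X \<longleftrightarrow>
     (\<forall>A B f. f \<in> cHom X A B \<longrightarrow> A \<in> cOb X \<and> B \<in> cOb X) \<and>
     (\<forall>A B A' B' f. f \<in> cHom X A B \<longrightarrow> f \<in> cHom X A' B' \<longrightarrow> A = A' \<and> B = B') \<and>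
     (\<forall>A \<in> cOb X. cId X A \<in> cHom X A A) \<and>
     (\<forall>A B C f g. f \<in> cHom X A B \<longrightarrow> g \<in> cHom X B C \<longrightarrow> cComp X A B C f g \<in> cHom X A C) \<and>
     (\<forall>A B f. f \<in> cHom X A B \<longrightarrow> cComp X A A B (cId X A) f = f \<and> cComp X A B B f (cId X B) = f) \<and>
     (\<forall>A B C D f g h. f \<in> cHom X A B \<longrightarrow> g \<in> cHom X B C \<longrightarrow> h \<in> cHom X C D \<longrightarrow>
        cComp X A C D (cComp X A B C f g) h = cComp X A B D f (cComp X B C D g h))"

definition has_finite_products :: "('o, 'a, 'z) clac_sig_scheme \<Rightarrow> bool" where
  "has_finite_products X \<longleftrightarrow>
     (\<forall>A \<in> cOb X. \<forall>B \<in> cOb X. cProd X A B \<in> cOb X \<and>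
        cPi0 X A B \<in> cHom X (cProd X A B) A \<and> cPi1 X A B \<in> cHom X (cProd X A B) B) \<and>
     (\<forall>C A B f g. f \<in> cHom X C A \<longrightarrow> g \<in> cHom X C B \<longrightarrow>
        cPair X C A B f g \<in> cHom X C (cProd X A B) \<and>
        cComp X C (cProd X A B) A (cPair X C A B f g) (cPi0 X A B) = f \<and>
        cComp X C (cProd X A B) B (cPair X C A B f g) (cPi1 X A B) = g) \<and>
     (\<forall>C A B h. A \<in> cOb X \<longrightarrow> B \<in> cOb X \<longrightarrow> h \<in> cHom X C (cProd X A B) \<longrightarrow>
        cPair X C A B (cComp X C (cProd X A B) A h (cPi0 X A B))
                      (cComp X C (cProd X A B) B h (cPi1 X A B)) = h) \<and>
     cTerm X \<in> cOb X \<and>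
     (\<forall>A \<in> cOb X. cBang X A \<in> cHom X A (cTerm X)) \<and>
     (\<forall>A h. h \<in> cHom X A (cTerm X) \<longrightarrow> h = cBang X A)"

definition is_left_additive :: "('o, 'a, 'z) clac_sig_scheme \<Rightarrow> bool" where
  "is_left_additive X \<longleftrightarrow>
     (\<forall>A B f g. f \<in> cHom X A B \<longrightarrow> g \<in> cHom X A B \<longrightarrow> cAdd X A B f g \<in> cHom X A B) \<and>
     (\<forall>A \<in> cOb X. \<forall>B \<in> cOb X. cZero X A B \<in> cHom X A B) \<and>
     (\<forall>A B f g h. f \<in> cHom X A B \<longrightarrow> g \<in> cHom X A B \<longrightarrow> h \<in> cHom X A B \<longrightarrow>
        cAdd X A B (cAdd X A B f g) h = cAdd X A B f (cAdd X A B g h)) \<and>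
     (\<forall>A B f g. f \<in> cHom X A B \<longrightarrow> g \<in> cHom X A B \<longrightarrow> cAdd X A B f g = cAdd X A B g f) \<and>
     (\<forall>A B f. f \<in> cHom X A B \<longrightarrow> cAdd X A B f (cZero X A B) = f) \<and>
     (\<forall>A B C f g h. f \<in> cHom X A B \<longrightarrow> g \<in> cHom X B C \<longrightarrow> h \<in> cHom X B C \<longrightarrow>
        cComp X A B C f (cAdd X B C g h) = cAdd X A C (cComp X A B C f g) (cComp X A B C f h)) \<and>
     (\<forall>A B C f. f \<in> cHom X A B \<longrightarrow> C \<in> cOb X \<longrightarrow> cComp X A B C f (cZero X B C) = cZero X A C) \<and>
     (\<forall>C A B f g. A \<in> cOb X \<longrightarrow> B \<in> cOb X \<longrightarrow> f \<in> cHom X C (cProd X A B) \<longrightarrow> g \<in> cHom X C (cProd X A B) \<longrightarrow>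
        cComp X C (cProd X A B) A (cAdd X C (cProd X A B) f g) (cPi0 X A B)
          = cAdd X C A (cComp X C (cProd X A B) A f (cPi0 X A B)) (cComp X C (cProd X A B) A g (cPi0 X A B)) \<and>
        cComp X C (cProd X A B) B (cAdd X C (cProd X A B) f g) (cPi1 X A B)
          = cAdd X C B (cComp X C (cProd X A B) B f (cPi1 X A B)) (cComp X C (cProd X A B) B g (cPi1 X A B))) \<and>
     (\<forall>C A B. C \<in> cOb X \<longrightarrow> A \<in> cOb X \<longrightarrow> B \<in> cOb X \<longrightarrow>
        cComp X C (cProd X A B) A (cZero X C (cProd X A B)) (cPi0 X A B) = cZero X C A \<and>
        cComp X C (cProd X A B) B (cZero X C (cProd X A B)) (cPi1 X A B) = cZero X C B)"

definition is_clac :: "('o, 'a, 'z) clac_sig_scheme \<Rightarrow> bool" where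
  "is_clac X \<longleftrightarrow> is_category X \<and> has_finite_products X \<and> is_left_additive X"

type_synonym ('o, 'a, 'p, 'b) cfunctor = "('o \<Rightarrow> 'p) \<times> ('a \<Rightarrow> 'b)"

definition clac_hom :: "('o, 'a, 'z) clac_sig_scheme \<Rightarrow> ('p, 'b, 'w) clac_sig_scheme \<Rightarrow>
    ('o, 'a, 'p, 'b) cfunctor \<Rightarrow> bool" where
  "clac_hom X Y F \<longleftrightarrow>
     (\<forall>A \<in> cOb X. fst F A \<in> cOb Y) \<and>
     (\<forall>A B f. f \<in> cHom X A B \<longrightarrow> snd F f \<in> cHom Y (fst F A) (fst F B)) \<and>
     (\<forall>A \<in> cOb X. snd F (cId X A) = cId Y (fst F A)) \<and>
     (\<forall>A B C f g. f \<in> cHom X A B \<longrightarrow> g \<in> cHom X B C \<longrightarrow>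
        snd F (cComp X A B C f g) = cComp Y (fst F A) (fst F B) (fst F C) (snd F f) (snd F g)) \<and>
     (\<forall>A \<in> cOb X. \<forall>B \<in> cOb X.
        fst F (cProd X A B) = cProd Y (fst F A) (fst F B) \<and>
        snd F (cPi0 X A B) = cPi0 Y (fst F A) (fst F B) \<and>
        snd F (cPi1 X A B) = cPi1 Y (fst F A) (fst F B)) \<and>
     fst F (cTerm X) = cTerm Y \<and>
     (\<forall>A B f g. f \<in> cHom X A B \<longrightarrow> g \<in> cHom X A B \<longrightarrow>
        snd F (cAdd X A B f g) = cAdd Y (fst F A) (fst F B) (snd F f) (snd F g)) \<and>
     (\<forall>A \<in> cOb X. \<forall>B \<in> cOb X. snd F (cZero X A B) = cZero Y (fst F A) (fst F B))"

definition functor_eq :: "('o, 'a, 'z) clac_sig_scheme \<Rightarrow> ('o, 'a, 'p, 'b) cfunctor \<Rightarrow>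
    ('o, 'a, 'p, 'b) cfunctor \<Rightarrow> bool" where
  "functor_eq X F G \<longleftrightarrow>
     (\<forall>A \<in> cOb X. fst F A = fst G A) \<and> (\<forall>A B f. f \<in> cHom X A B \<longrightarrow> snd F f = snd G f)"

definition fid :: "('o, 'a, 'o, 'a) cfunctor" where
  "fid = (id, id)"

definition ffcomp :: "('o, 'a, 'p, 'b) cfunctor \<Rightarrow> ('p, 'b, 'q, 'c) cfunctor \<Rightarrow> ('o, 'a, 'q, 'c) cfunctor" where
  "ffcomp F G = (fst G \<circ> fst F, snd G \<circ> snd F)"

definition Pobj :: "('o, 'a, 'z) clac_sig_scheme \<Rightarrow> 'o \<Rightarrow> 'o" where
  "Pobj X A = cProd X A A"

definition Pn_obj :: "('o, 'a, 'z) clac_sig_scheme \<Rightarrow> nat \<Rightarrow> 'o \<Rightarrow> 'o" where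
  "Pn_obj X n A = (Pobj X ^^ n) A"

definition Parr :: "('o, 'a, 'z) clac_sig_scheme \<Rightarrow> 'o \<Rightarrow> 'o \<Rightarrow> 'a \<Rightarrow> 'a" where
  "Parr X A B f = cPair X (Pobj X A) B B (cComp X (Pobj X A) A B (cPi0 X A A) f)
                                         (cComp X (Pobj X A) A B (cPi1 X A A) f)"

primrec Pn_arr :: "('o, 'a, 'z) clac_sig_scheme \<Rightarrow> nat \<Rightarrow> 'o \<Rightarrow> 'o \<Rightarrow> 'a \<Rightarrow> 'a" where
  "Pn_arr X 0 A B f = f"
| "Pn_arr X (Suc n) A B f = Parr X (Pn_obj X n A) (Pn_obj X n B) (Pn_arr X n A B f)"

definition Tseq :: "('o, 'a, 'z) clac_sig_scheme \<Rightarrow> 'o \<Rightarrow> 'o \<Rightarrow> (nat \<Rightarrow> 'a) \<Rightarrow> nat \<Rightarrow> 'a" where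
  "Tseq X A B f = (\<lambda>n. cPair X (Pn_obj X n (Pobj X A)) B B
       (cComp X (Pn_obj X n (Pobj X A)) (Pn_obj X n A) B (Pn_arr X n (Pobj X A) A (cPi0 X A A)) (f n))
       (f (Suc n)))"

primrec Tn :: "('o, 'a, 'z) clac_sig_scheme \<Rightarrow> nat \<Rightarrow> 'o \<Rightarrow> 'o \<Rightarrow> (nat \<Rightarrow> 'a) \<Rightarrow> nat \<Rightarrow> 'a" where
  "Tn X 0 A B f = f"
| "Tn X (Suc n) A B f = Tseq X (Pn_obj X n A) (Pn_obj X n B) (Tn X n A B f)"

primrec Iseq :: "('o, 'a, 'z) clac_sig_scheme \<Rightarrow> 'o \<Rightarrow> nat \<Rightarrow> 'a" where
  "Iseq X A 0 = cId X A"
| "Iseq X A (Suc n) = cComp X (Pn_obj X (Suc n) A) (Pn_obj X n A) A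
                        (cPi1 X (Pn_obj X n A) (Pn_obj X n A)) (Iseq X A n)"

definition Dbar :: "('o, 'a, 'z) clac_sig_scheme \<Rightarrow> ('o, nat \<Rightarrow> 'a) clac_sig" where
  "Dbar X = \<lparr>
     cOb = cOb X,
     cHom = (\<lambda>A B. {f. \<forall>n. f n \<in> cHom X (Pn_obj X n A) B}),
     cId = Iseq X,
     cComp = (\<lambda>A B C f g n. cComp X (Pn_obj X n A) (Pn_obj X n B) C (Tn X n A B f 0) (g n)),
     cProd = cProd X,
     cPi0 = (\<lambda>A B n. cComp X (Pn_obj X n (cProd X A B)) (cProd X A B) A
                        (Iseq X (cProd X A B) n) (cPi0 X A B)),
     cPi1 = (\<lambda>A B n. cComp X (Pn_obj X n (cProd X A B)) (cProd X A B) B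
                        (Iseq X (cProd X A B) n) (cPi1 X A B)),
     cPair = (\<lambda>C A B f g n. cPair X (Pn_obj X n C) A B (f n) (g n)),
     cTerm = cTerm X,
     cBang = (\<lambda>A n. cBang X (Pn_obj X n A)),
     cAdd = (\<lambda>A B f g n. cAdd X (Pn_obj X n A) B (f n) (g n)),
     cZero = (\<lambda>A B n. cZero X (Pn_obj X n A) B) \<rparr>"

definition Dbar_map :: "('o, 'a, 'p, 'b) cfunctor \<Rightarrow> ('o, nat \<Rightarrow> 'a, 'p, nat \<Rightarrow> 'b) cfunctor" where
  "Dbar_map F = (fst F, \<lambda>f n. snd F (f n))"

definition eps_bar :: "('o, nat \<Rightarrow> 'a, 'o, 'a) cfunctor" where
  "eps_bar = (id, \<lambda>f. f 0)"

definition Dshift :: "(nat \<Rightarrow> 'a) \<Rightarrow> nat \<Rightarrow> 'a" where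
  "Dshift f = (\<lambda>n. f (Suc n))"

definition delta_bar :: "('o, nat \<Rightarrow> 'a, 'o, nat \<Rightarrow> nat \<Rightarrow> 'a) cfunctor" where
  "delta_bar = (id, \<lambda>f n. (Dshift ^^ n) f)"

end

theory Submission
  imports Defs
begin

text \<open>
  Everything rests on two facts about the operator \<open>T\<close> on pre-\<open>D\<close>-sequences. First, \<open>T\<close> is
  functorial, \<open>T(f \<ast> g) = T f \<ast> T g\<close>; comparing components this reduces to the naturality of
  \<open>P\<^sup>k(\<pi>\<^sub>0)\<close> with respect to \<open>T\<^sup>k\<close>, proved by induction on \<open>k\<close>, and it gives associativity.
  Second, \<open>T\<^sup>n\<close> sends the lift \<open>(i\<^sub>k h)\<^sub>k\<close> of an arrow \<open>h\<close> to the lift of \<open>P\<^sup>n(h)\<close>; since the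
  identities and projections of \<open>Dbar X\<close> are lifts, composing with them acts termwise, so the
  unit laws, products and additive structure of \<open>Dbar X\<close> are inherited termwise from \<open>X\<close>.
  For \<open>\<delta>\<close> one checks that identities, \<open>T\<close> and composition of \<open>Dbar X\<close> act on the shifted
  sequences \<open>(D\<^sup>n f)\<^sub>n\<close> as the shifts of their counterparts in \<open>X\<close>. Naturality of \<open>\<epsilon>\<close> and
  \<open>\<delta>\<close> and the comonad laws are then equalities of reindexings that hold on the nose.
\<close>

locale cartesian_category =
  fixes X :: "('o, 'a, 'z) clac_sig_scheme"
  assumes category: "is_category X" and finite_products: "has_finite_products X"
begin

abbreviation "Ob \<equiv> cOb X"
abbreviation "Hom \<equiv> cHom X"
abbreviation "cmp \<equiv> cComp X"
abbreviation "idn \<equiv> cId X"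
abbreviation "p0 \<equiv> cPi0 X"
abbreviation "p1 \<equiv> cPi1 X"
abbreviation "pair \<equiv> cPair X"
abbreviation "P \<equiv> Pobj X"
abbreviation "Pn \<equiv> Pn_obj X"
abbreviation "Pn_map \<equiv> Pn_arr X"
abbreviation "Ppi0 k A \<equiv> Pn_arr X k (Pobj X A) A (cPi0 X A A)"

lemma dom_ob: "f \<in> Hom A B \<Longrightarrow> A \<in> Ob"
  using category unfolding is_category_def by metis
lemma cod_ob: "f \<in> Hom A B \<Longrightarrow> B \<in> Ob"
  using category unfolding is_category_def by metis
lemma hom_unique: "f \<in> Hom A B \<Longrightarrow> f \<in> Hom A' B' \<Longrightarrow> A = A' \<and> B = B'"
  using category unfolding is_category_def by metis
lemma id_hom [intro]: "A \<in> Ob \<Longrightarrow> idn A \<in> Hom A A"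
  using category unfolding is_category_def by metis
lemma comp_hom [intro]: "f \<in> Hom A B \<Longrightarrow> g \<in> Hom B C \<Longrightarrow> cmp A B C f g \<in> Hom A C"
  using category unfolding is_category_def by metis
lemma id_left: "f \<in> Hom A B \<Longrightarrow> cmp A A B (idn A) f = f"
  using category unfolding is_category_def by metis
lemma id_right: "f \<in> Hom A B \<Longrightarrow> cmp A B B f (idn B) = f"
  using category unfolding is_category_def by metis
lemma comp_assoc: "f \<in> Hom A B \<Longrightarrow> g \<in> Hom B C \<Longrightarrow> h \<in> Hom C D \<Longrightarrow>
   cmp A C D (cmp A B C f g) h = cmp A B D f (cmp B C D g h)"
  using category unfolding is_category_def by metis

lemma prod_ob [intro]: "A \<in> Ob \<Longrightarrow> B \<in> Ob \<Longrightarrow> cProd X A B \<in> Ob"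
  using finite_products unfolding has_finite_products_def by metis
lemma pi0_hom [intro]: "A \<in> Ob \<Longrightarrow> B \<in> Ob \<Longrightarrow> p0 A B \<in> Hom (cProd X A B) A"
  using finite_products unfolding has_finite_products_def by metis
lemma pi1_hom [intro]: "A \<in> Ob \<Longrightarrow> B \<in> Ob \<Longrightarrow> p1 A B \<in> Hom (cProd X A B) B"
  using finite_products unfolding has_finite_products_def by metis
lemma pair_hom [intro]: "f \<in> Hom C A \<Longrightarrow> g \<in> Hom C B \<Longrightarrow> pair C A B f g \<in> Hom C (cProd X A B)"
  using finite_products unfolding has_finite_products_def by metis
lemma pair_pi0: "f \<in> Hom C A \<Longrightarrow> g \<in> Hom C B \<Longrightarrow> cmp C (cProd X A B) A (pair C A B f g) (p0 A B) = f"
  using finite_products unfolding has_finite_products_def by metis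
lemma pair_pi1: "f \<in> Hom C A \<Longrightarrow> g \<in> Hom C B \<Longrightarrow> cmp C (cProd X A B) B (pair C A B f g) (p1 A B) = g"
  using finite_products unfolding has_finite_products_def by metis
lemma pair_eta: "h \<in> Hom C (cProd X A B) \<Longrightarrow> A \<in> Ob \<Longrightarrow> B \<in> Ob \<Longrightarrow>
   pair C A B (cmp C (cProd X A B) A h (p0 A B)) (cmp C (cProd X A B) B h (p1 A B)) = h"
  using finite_products unfolding has_finite_products_def by metis
lemma term_ob: "cTerm X \<in> Ob"
  and bang_hom: "A \<in> Ob \<Longrightarrow> cBang X A \<in> Hom A (cTerm X)"
  and bang_unique: "h \<in> Hom A (cTerm X) \<Longrightarrow> h = cBang X A"
  using finite_products unfolding has_finite_products_def by metis+

lemma pair_unique: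
  "h \<in> Hom C (cProd X A B) \<Longrightarrow> A \<in> Ob \<Longrightarrow> B \<in> Ob \<Longrightarrow>
   cmp C (cProd X A B) A h (p0 A B) = f \<Longrightarrow> cmp C (cProd X A B) B h (p1 A B) = g \<Longrightarrow>
   h = pair C A B f g"
  by (metis pair_eta)

lemma comp_pair:
  assumes h: "h \<in> Hom D C" and f: "f \<in> Hom C A" and g: "g \<in> Hom C B"
  shows "cmp D C (cProd X A B) h (pair C A B f g) = pair D A B (cmp D C A h f) (cmp D C B h g)"
proof (rule pair_unique)
  have A: "A \<in> Ob" and B: "B \<in> Ob" using f g by (auto intro: cod_ob)
  then show "A \<in> Ob" "B \<in> Ob" .
  show "cmp D C (cProd X A B) h (pair C A B f g) \<in> Hom D (cProd X A B)" using h f g by blast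
  show "cmp D (cProd X A B) A (cmp D C (cProd X A B) h (pair C A B f g)) (p0 A B) = cmp D C A h f"
    using comp_assoc[OF h pair_hom[OF f g] pi0_hom[OF A B]] pair_pi0[OF f g] by simp
  show "cmp D (cProd X A B) B (cmp D C (cProd X A B) h (pair C A B f g)) (p1 A B) = cmp D C B h g"
    using comp_assoc[OF h pair_hom[OF f g] pi1_hom[OF A B]] pair_pi1[OF f g] by simp
qed

end

locale clac = cartesian_category +
  assumes left_additive: "is_left_additive X"
begin

lemma add_hom [intro]: "f \<in> Hom A B \<Longrightarrow> g \<in> Hom A B \<Longrightarrow> cAdd X A B f g \<in> Hom A B"
  using left_additive unfolding is_left_additive_def by metis
lemma zero_hom [intro]: "A \<in> Ob \<Longrightarrow> B \<in> Ob \<Longrightarrow> cZero X A B \<in> Hom A B"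
  using left_additive unfolding is_left_additive_def by metis
lemma add_assoc: "f \<in> Hom A B \<Longrightarrow> g \<in> Hom A B \<Longrightarrow> h \<in> Hom A B \<Longrightarrow>
   cAdd X A B (cAdd X A B f g) h = cAdd X A B f (cAdd X A B g h)"
  using left_additive unfolding is_left_additive_def by metis
lemma add_commute: "f \<in> Hom A B \<Longrightarrow> g \<in> Hom A B \<Longrightarrow> cAdd X A B f g = cAdd X A B g f"
  using left_additive unfolding is_left_additive_def by metis
lemma add_zero: "f \<in> Hom A B \<Longrightarrow> cAdd X A B f (cZero X A B) = f"
  using left_additive unfolding is_left_additive_def by metis
lemma comp_add: "f \<in> Hom A B \<Longrightarrow> g \<in> Hom B C \<Longrightarrow> h \<in> Hom B C \<Longrightarrow>
   cmp A B C f (cAdd X B C g h) = cAdd X A C (cmp A B C f g) (cmp A B C f h)"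
  using left_additive unfolding is_left_additive_def by metis
lemma comp_zero: "f \<in> Hom A B \<Longrightarrow> C \<in> Ob \<Longrightarrow> cmp A B C f (cZero X B C) = cZero X A C"
  using left_additive unfolding is_left_additive_def by metis
lemma add_pi0: "A \<in> Ob \<Longrightarrow> B \<in> Ob \<Longrightarrow> f \<in> Hom C (cProd X A B) \<Longrightarrow> g \<in> Hom C (cProd X A B) \<Longrightarrow>
   cmp C (cProd X A B) A (cAdd X C (cProd X A B) f g) (p0 A B)
   = cAdd X C A (cmp C (cProd X A B) A f (p0 A B)) (cmp C (cProd X A B) A g (p0 A B))"
  using left_additive unfolding is_left_additive_def by metis
lemma add_pi1: "A \<in> Ob \<Longrightarrow> B \<in> Ob \<Longrightarrow> f \<in> Hom C (cProd X A B) \<Longrightarrow> g \<in> Hom C (cProd X A B) \<Longrightarrow>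
   cmp C (cProd X A B) B (cAdd X C (cProd X A B) f g) (p1 A B)
   = cAdd X C B (cmp C (cProd X A B) B f (p1 A B)) (cmp C (cProd X A B) B g (p1 A B))"
  using left_additive unfolding is_left_additive_def by metis
lemma zero_pi0: "C \<in> Ob \<Longrightarrow> A \<in> Ob \<Longrightarrow> B \<in> Ob \<Longrightarrow>
   cmp C (cProd X A B) A (cZero X C (cProd X A B)) (p0 A B) = cZero X C A"
  using left_additive unfolding is_left_additive_def by metis
lemma zero_pi1: "C \<in> Ob \<Longrightarrow> A \<in> Ob \<Longrightarrow> B \<in> Ob \<Longrightarrow>
   cmp C (cProd X A B) B (cZero X C (cProd X A B)) (p1 A B) = cZero X C B"
  using left_additive unfolding is_left_additive_def by metis

end

lemma clac_if_is_clac: "is_clac X \<Longrightarrow> clac X"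
  by (simp add: is_clac_def clac_def cartesian_category_def clac_axioms_def)

lemma Pn_obj_0 [simp]: "Pn_obj X 0 A = A"
  by (simp add: Pn_obj_def)
lemma Pobj_Pn_obj [simp]: "Pobj X (Pn_obj X n A) = Pn_obj X (Suc n) A"
  by (simp add: Pn_obj_def)
lemma Pn_obj_Pobj [simp]: "Pn_obj X n (Pobj X A) = Pn_obj X (Suc n) A"
  by (simp add: Pn_obj_def funpow_swap1)
lemma Pn_obj_Pn_obj [simp]: "Pn_obj X m (Pn_obj X n A) = Pn_obj X (m + n) A"
  by (simp add: Pn_obj_def funpow_add)
lemma Pn_obj_1 [simp]: "Pn_obj X (Suc 0) A = Pobj X A"
  by (simp add: Pn_obj_def)
lemma cProd_self [simp]: "cProd X A A = Pobj X A"
  by (simp add: Pobj_def)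

context cartesian_category
begin

lemma Pobj_ob [intro]: "A \<in> Ob \<Longrightarrow> P A \<in> Ob"
  using prod_ob[of A A] by simp
lemma Pn_obj_ob [intro]: "A \<in> Ob \<Longrightarrow> Pn n A \<in> Ob"
  by (induction n) (use Pobj_ob in fastforce)+
lemma pi0_P_hom [intro]: "A \<in> Ob \<Longrightarrow> p0 A A \<in> Hom (P A) A"
  using pi0_hom[of A A] by simp
lemma pi1_P_hom [intro]: "A \<in> Ob \<Longrightarrow> p1 A A \<in> Hom (P A) A"
  using pi1_hom[of A A] by simp
lemma pi0_Pn_hom [intro]: "A \<in> Ob \<Longrightarrow> p0 (Pn n A) (Pn n A) \<in> Hom (Pn (Suc n) A) (Pn n A)"
  using pi0_P_hom[of "Pn n A"] by auto
lemma pi1_Pn_hom [intro]: "A \<in> Ob \<Longrightarrow> p1 (Pn n A) (Pn n A) \<in> Hom (Pn (Suc n) A) (Pn n A)"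
  using pi1_P_hom[of "Pn n A"] by auto
lemma pair_P_hom [intro]: "f \<in> Hom C A \<Longrightarrow> g \<in> Hom C A \<Longrightarrow> pair C A A f g \<in> Hom C (P A)"
  using pair_hom[of f C A g A] by simp
lemma pair_P_pi0: "f \<in> Hom C A \<Longrightarrow> g \<in> Hom C A \<Longrightarrow> cmp C (P A) A (pair C A A f g) (p0 A A) = f"
  using pair_pi0[of f C A g A] by simp
lemma pair_P_pi1: "f \<in> Hom C A \<Longrightarrow> g \<in> Hom C A \<Longrightarrow> cmp C (P A) A (pair C A A f g) (p1 A A) = g"
  using pair_pi1[of f C A g A] by simp
lemma comp_pair_P: "h \<in> Hom D C \<Longrightarrow> f \<in> Hom C A \<Longrightarrow> g \<in> Hom C A \<Longrightarrow>
   cmp D C (P A) h (pair C A A f g) = pair D A A (cmp D C A h f) (cmp D C A h g)"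
  using comp_pair[of h D C f A g A] by simp
lemma pair_P_unique: "h \<in> Hom C (P A) \<Longrightarrow> A \<in> Ob \<Longrightarrow>
   cmp C (P A) A h (p0 A A) = f \<Longrightarrow> cmp C (P A) A h (p1 A A) = g \<Longrightarrow> h = pair C A A f g"
  using pair_unique[of h C A A f g] by simp

lemma Parr_hom [intro]: "f \<in> Hom A B \<Longrightarrow> Parr X A B f \<in> Hom (P A) (P B)"
  unfolding Parr_def by (intro pair_P_hom comp_hom pi0_P_hom pi1_P_hom dom_ob)

lemma Parr_pi0: "f \<in> Hom A B \<Longrightarrow> cmp (P A) (P B) B (Parr X A B f) (p0 B B) = cmp (P A) A B (p0 A A) f"
  unfolding Parr_def by (intro pair_P_pi0 comp_hom pi0_P_hom pi1_P_hom dom_ob)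
lemma Parr_pi1: "f \<in> Hom A B \<Longrightarrow> cmp (P A) (P B) B (Parr X A B f) (p1 B B) = cmp (P A) A B (p1 A A) f"
  unfolding Parr_def by (intro pair_P_pi1 comp_hom pi0_P_hom pi1_P_hom dom_ob)

lemma Parr_comp:
  assumes f: "f \<in> Hom A B" and g: "g \<in> Hom B C"
  shows "Parr X A C (cmp A B C f g) = cmp (P A) (P B) (P C) (Parr X A B f) (Parr X B C g)"
proof -
  have A: "A \<in> Ob" and B: "B \<in> Ob" using f by (auto intro: dom_ob cod_ob)
  have Pf: "Parr X A B f \<in> Hom (P A) (P B)" using f by blast
  have "cmp (P A) (P B) (P C) (Parr X A B f) (Parr X B C g)
     = pair (P A) C C (cmp (P A) (P B) C (Parr X A B f) (cmp (P B) B C (p0 B B) g))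
                      (cmp (P A) (P B) C (Parr X A B f) (cmp (P B) B C (p1 B B) g))"
    unfolding Parr_def[of X B C g] using Pf B g by (intro comp_pair_P) auto
  also have "cmp (P A) (P B) C (Parr X A B f) (cmp (P B) B C (p0 B B) g) = cmp (P A) A C (p0 A A) (cmp A B C f g)"
    using comp_assoc[OF Pf pi0_P_hom[OF B] g, symmetric] Parr_pi0[OF f] comp_assoc[OF pi0_P_hom[OF A] f g]
    by simp
  also have "cmp (P A) (P B) C (Parr X A B f) (cmp (P B) B C (p1 B B) g) = cmp (P A) A C (p1 A A) (cmp A B C f g)"
    using comp_assoc[OF Pf pi1_P_hom[OF B] g, symmetric] Parr_pi1[OF f] comp_assoc[OF pi1_P_hom[OF A] f g]
    by simp
  finally show ?thesis unfolding Parr_def by simp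
qed

lemma Parr_id: "A \<in> Ob \<Longrightarrow> Parr X A A (idn A) = idn (P A)"
  unfolding Parr_def
  by (rule pair_P_unique[symmetric])
     (use id_left[OF pi0_P_hom] id_right[OF pi0_P_hom] id_left[OF pi1_P_hom] id_right[OF pi1_P_hom] in auto)

lemma Pn_arr_hom [intro]: "f \<in> Hom A B \<Longrightarrow> Pn_map n A B f \<in> Hom (Pn n A) (Pn n B)"
  by (induction n) (use Parr_hom in fastforce)+

lemma Pn_arr_comp: "f \<in> Hom A B \<Longrightarrow> g \<in> Hom B C \<Longrightarrow>
   Pn_map n A C (cmp A B C f g) = cmp (Pn n A) (Pn n B) (Pn n C) (Pn_map n A B f) (Pn_map n B C g)"
  by (induction n) (simp_all add: Parr_comp Pn_arr_hom)

lemma Pn_arr_id: "A \<in> Ob \<Longrightarrow> Pn_map n A A (idn A) = idn (Pn n A)"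
  by (induction n) (simp_all add: Parr_id Pn_obj_ob)

lemma Pn_arr_Pn_arr: "Pn_map m (Pn n A) (Pn n B) (Pn_map n A B f) = Pn_map (m + n) A B f"
  by (induction m) simp_all

lemma Iseq_hom [intro]: "A \<in> Ob \<Longrightarrow> Iseq X A n \<in> Hom (Pn n A) A"
  by (induction n) auto

lemma Iseq_natural: "f \<in> Hom A B \<Longrightarrow>
   cmp (Pn n A) (Pn n B) B (Pn_map n A B f) (Iseq X B n) = cmp (Pn n A) A B (Iseq X A n) f"
proof (induction n)
  case 0
  then show ?case by (simp add: id_left id_right)
next
  case (Suc n)
  have A: "A \<in> Ob" and B: "B \<in> Ob" using Suc.prems by (auto intro: dom_ob cod_ob)
  let ?h = "Pn_map n A B f"
  have h: "?h \<in> Hom (Pn n A) (Pn n B)" using Suc.prems by blast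
  have Ph: "Parr X (Pn n A) (Pn n B) ?h \<in> Hom (Pn (Suc n) A) (Pn (Suc n) B)"
    using Parr_hom[OF h] by simp
  have "cmp (Pn (Suc n) A) (Pn (Suc n) B) B (Pn_map (Suc n) A B f) (Iseq X B (Suc n))
      = cmp (Pn (Suc n) A) (Pn n B) B
          (cmp (Pn (Suc n) A) (Pn (Suc n) B) (Pn n B) (Parr X (Pn n A) (Pn n B) ?h) (p1 (Pn n B) (Pn n B)))
          (Iseq X B n)"
    using comp_assoc[OF Ph pi1_Pn_hom[OF B] Iseq_hom[OF B], symmetric] by simp
  also have "\<dots> = cmp (Pn (Suc n) A) (Pn n A) B (p1 (Pn n A) (Pn n A)) (cmp (Pn n A) (Pn n B) B ?h (Iseq X B n))"
    using Parr_pi1[OF h] comp_assoc[OF pi1_Pn_hom[OF A] h Iseq_hom[OF B]] by simp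
  also have "\<dots> = cmp (Pn (Suc n) A) A B (Iseq X A (Suc n)) f"
    using Suc.IH[OF Suc.prems] comp_assoc[OF pi1_Pn_hom[OF A] Iseq_hom[OF A] Suc.prems] by simp
  finally show ?case .
qed

lemma Iseq_add: "A \<in> Ob \<Longrightarrow>
   Iseq X A (k + n) = cmp (Pn (k + n) A) (Pn n A) A (Iseq X (Pn n A) k) (Iseq X A n)"
proof (induction k)
  case 0
  then show ?case using id_left[OF Iseq_hom] by simp
next
  case (Suc k)
  have I: "Iseq X (Pn n A) k \<in> Hom (Pn (k + n) A) (Pn n A)"
    using Iseq_hom[of "Pn n A" k] Suc.prems by auto
  show ?case
    using Suc comp_assoc[OF pi1_Pn_hom[OF Suc.prems, of "k + n"] I Iseq_hom[OF Suc.prems]] by simp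
qed

lemma Iseq_Suc_right: "A \<in> Ob \<Longrightarrow> Iseq X A (Suc k) = cmp (Pn (Suc k) A) (P A) A (Iseq X (P A) k) (p1 A A)"
  using Iseq_add[of A k "Suc 0"] id_right[OF pi1_P_hom, of A] by simp

end

section \<open>Pre-\<open>D\<close>-sequences, the operator \<open>T\<close> and lifts\<close>

definition Dhom :: "('o, 'a, 'z) clac_sig_scheme \<Rightarrow> 'o \<Rightarrow> 'o \<Rightarrow> (nat \<Rightarrow> 'a) set" where
  "Dhom X A B = {f. \<forall>n. f n \<in> cHom X (Pn_obj X n A) B}"

definition Dcomp :: "('o, 'a, 'z) clac_sig_scheme \<Rightarrow> 'o \<Rightarrow> 'o \<Rightarrow> 'o \<Rightarrow>
    (nat \<Rightarrow> 'a) \<Rightarrow> (nat \<Rightarrow> 'a) \<Rightarrow> nat \<Rightarrow> 'a" where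
  "Dcomp X A B C f g = (\<lambda>n. cComp X (Pn_obj X n A) (Pn_obj X n B) C (Tn X n A B f 0) (g n))"

text \<open>The sequence \<open>i\<^sub>\<bullet> \<cdot> h\<close> of the paper; the projections of \<open>Dbar X\<close> are of this form.\<close>
definition lift :: "('o, 'a, 'z) clac_sig_scheme \<Rightarrow> 'o \<Rightarrow> 'o \<Rightarrow> 'a \<Rightarrow> nat \<Rightarrow> 'a" where
  "lift X A B h = (\<lambda>k. cComp X (Pn_obj X k A) A B (Iseq X A k) h)"

lemma Dhom_iff: "f \<in> Dhom X A B \<longleftrightarrow> (\<forall>n. f n \<in> cHom X (Pn_obj X n A) B)"
  by (simp add: Dhom_def)

lemma Tn_Tn: "Tn X m (Pn_obj X n A) (Pn_obj X n B) (Tn X n A B f) = Tn X (m + n) A B f"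
  by (induction m) simp_all

lemma Tn_Tseq: "Tn X m (Pobj X A) (Pobj X B) (Tseq X A B f) = Tn X (Suc m) A B f"
  using Tn_Tn[of X m "Suc 0" A B f] by simp

context cartesian_category
begin

lemma Dhom_0: "f \<in> Dhom X A B \<Longrightarrow> f 0 \<in> Hom A B"
  using Pn_obj_0[of X A] by (metis Dhom_iff)

lemma Dhom_ob: "f \<in> Dhom X A B \<Longrightarrow> A \<in> Ob \<and> B \<in> Ob"
  using Dhom_0 dom_ob cod_ob by blast

lemma Ppi0_hom [intro]:
  "A \<in> Ob \<Longrightarrow> Ppi0 k A \<in> Hom (Pn (Suc k) A) (Pn k A)"
  using Pn_arr_hom[OF pi0_P_hom, of A k] by simp

lemma Iseq_Dhom: "A \<in> Ob \<Longrightarrow> Iseq X A \<in> Dhom X A A"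
  by (simp add: Dhom_iff Iseq_hom)

lemma
  assumes f: "f \<in> Dhom X A B"
  shows Tseq_component_hom: "Tseq X A B f k \<in> Hom (Pn (Suc k) A) (P B)"
    and Tseq_pi0: "cmp (Pn (Suc k) A) (P B) B (Tseq X A B f k) (p0 B B)
         = cmp (Pn (Suc k) A) (Pn k A) B (Ppi0 k A) (f k)"
    and Tseq_pi1: "cmp (Pn (Suc k) A) (P B) B (Tseq X A B f k) (p1 B B) = f (Suc k)"
proof -
  have A: "A \<in> Ob" using Dhom_ob[OF f] by blast
  have "f k \<in> Hom (Pn k A) B" "f (Suc k) \<in> Hom (Pn (Suc k) A) B"
    using f by (auto simp: Dhom_iff)
  with Ppi0_hom[OF A, of k] show
    "Tseq X A B f k \<in> Hom (Pn (Suc k) A) (P B)"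
    "cmp (Pn (Suc k) A) (P B) B (Tseq X A B f k) (p0 B B)
       = cmp (Pn (Suc k) A) (Pn k A) B (Ppi0 k A) (f k)"
    "cmp (Pn (Suc k) A) (P B) B (Tseq X A B f k) (p1 B B) = f (Suc k)"
    unfolding Tseq_def by (simp_all add: pair_P_hom pair_P_pi0 pair_P_pi1 comp_hom)
qed

lemma Tseq_hom: "f \<in> Dhom X A B \<Longrightarrow> Tseq X A B f \<in> Dhom X (P A) (P B)"
  using Tseq_component_hom by (simp add: Dhom_iff)

lemma Tn_hom: "f \<in> Dhom X A B \<Longrightarrow> Tn X n A B f \<in> Dhom X (Pn n A) (Pn n B)"
  by (induction n) (use Tseq_hom in fastforce)+

lemma Tn_component_hom: "f \<in> Dhom X A B \<Longrightarrow> Tn X n A B f k \<in> Hom (Pn (k + n) A) (Pn n B)"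
  using Tn_hom[of f A B n] by (simp add: Dhom_iff)

lemma Tn_0_hom: "f \<in> Dhom X A B \<Longrightarrow> Tn X n A B f 0 \<in> Hom (Pn n A) (Pn n B)"
  using Tn_component_hom[of f A B n 0] by simp

lemma Tn_Iseq:
  "f \<in> Dhom X A B \<Longrightarrow> cmp (Pn (k + m) A) (Pn m B) B (Tn X m A B f k) (Iseq X B m) = f (k + m)"
proof (induction m arbitrary: k)
  case 0
  then show ?case using id_right[of "f k" "Pn k A" B] by (simp add: Dhom_iff)
next
  case (Suc m)
  have B: "B \<in> Ob" using Dhom_ob[OF Suc.prems] by blast
  let ?g = "Tn X m A B f"
  have g: "?g \<in> Dhom X (Pn m A) (Pn m B)" using Tn_hom[OF Suc.prems] .
  have Tg: "Tseq X (Pn m A) (Pn m B) ?g k \<in> Hom (Pn (Suc (k + m)) A) (Pn (Suc m) B)"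
    using Tseq_hom[OF g] by (simp add: Dhom_iff)
  show ?case
    using comp_assoc[OF Tg pi1_Pn_hom[OF B] Iseq_hom[OF B], symmetric] Tseq_pi1[OF g, of k]
      Suc.IH[OF Suc.prems, of "Suc k"] by simp
qed

lemma lift_hom: "h \<in> Hom A B \<Longrightarrow> lift X A B h \<in> Dhom X A B"
  unfolding lift_def Dhom_iff using Iseq_hom dom_ob by blast

lemma Tseq_lift:
  assumes h: "h \<in> Hom A B"
  shows "Tseq X A B (lift X A B h) = lift X (P A) (P B) (Parr X A B h)"
proof
  fix k
  have A: "A \<in> Ob" using h by (rule dom_ob)
  have IPA: "Iseq X (P A) k \<in> Hom (Pn (Suc k) A) (P A)" using Iseq_hom[of "P A" k] A by auto
  have first: "cmp (Pn (Suc k) A) (Pn k A) B (Ppi0 k A) (cmp (Pn k A) A B (Iseq X A k) h)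
        = cmp (Pn (Suc k) A) (P A) B (Iseq X (P A) k) (cmp (P A) A B (p0 A A) h)"
    using comp_assoc[OF Ppi0_hom[OF A] Iseq_hom[OF A] h, symmetric]
      Iseq_natural[OF pi0_P_hom[OF A], of k] comp_assoc[OF IPA pi0_P_hom[OF A] h]
    by simp
  have second: "cmp (Pn (Suc k) A) A B (Iseq X A (Suc k)) h
        = cmp (Pn (Suc k) A) (P A) B (Iseq X (P A) k) (cmp (P A) A B (p1 A A) h)"
    using Iseq_Suc_right[OF A, of k] comp_assoc[OF IPA pi1_P_hom[OF A] h] by simp
  have "lift X (P A) (P B) (Parr X A B h) k = pair (Pn (Suc k) A) B B
      (cmp (Pn (Suc k) A) (P A) B (Iseq X (P A) k) (cmp (P A) A B (p0 A A) h))
      (cmp (Pn (Suc k) A) (P A) B (Iseq X (P A) k) (cmp (P A) A B (p1 A A) h))"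
    unfolding lift_def Parr_def using IPA A h by (simp add: comp_pair_P comp_hom pi0_P_hom pi1_P_hom)
  then show "Tseq X A B (lift X A B h) k = lift X (P A) (P B) (Parr X A B h) k"
    unfolding Tseq_def using first second by (simp add: lift_def)
qed

lemma Tn_lift: "h \<in> Hom A B \<Longrightarrow> Tn X n A B (lift X A B h) = lift X (Pn n A) (Pn n B) (Pn_map n A B h)"
  by (induction n) (simp_all add: Tseq_lift Pn_arr_hom)

lemma Tn_lift_0: "h \<in> Hom A B \<Longrightarrow> Tn X n A B (lift X A B h) 0 = Pn_map n A B h"
  using Tn_lift[of h A B n] id_left[OF Pn_arr_hom[of h A B n]] by (simp add: lift_def)

lemma Iseq_eq_lift: "A \<in> Ob \<Longrightarrow> Iseq X A = lift X A A (idn A)"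
  using id_right[OF Iseq_hom] by (auto simp: lift_def)

lemma Tn_Iseq_0: "A \<in> Ob \<Longrightarrow> Tn X n A A (Iseq X A) 0 = idn (Pn n A)"
  using Tn_lift_0[OF id_hom, of A n] Pn_arr_id[of A n] Iseq_eq_lift[of A] by simp

lemma Dcomp_hom: "f \<in> Dhom X A B \<Longrightarrow> g \<in> Dhom X B C \<Longrightarrow> Dcomp X A B C f g \<in> Dhom X A C"
  unfolding Dcomp_def using Tn_0_hom by (simp add: comp_hom Dhom_iff)

lemma Dcomp_Iseq_left: "f \<in> Dhom X A B \<Longrightarrow> Dcomp X A A B (Iseq X A) f = f"
  unfolding Dcomp_def using Tn_Iseq_0 Dhom_ob id_left by (auto simp: Dhom_iff)

lemma Dcomp_Iseq_right: "f \<in> Dhom X A B \<Longrightarrow> Dcomp X A B B f (Iseq X B) = f"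
  unfolding Dcomp_def using Tn_Iseq[of f A B 0] by auto

lemma Dcomp_lift_left:
  "q \<in> Hom A B \<Longrightarrow> Dcomp X A B C (lift X A B q) G = (\<lambda>k. cmp (Pn k A) (Pn k B) C (Pn_map k A B q) (G k))"
  unfolding Dcomp_def Tn_lift_0 ..

lemma Dcomp_lift_right:
  assumes f: "f \<in> Dhom X A B" and h: "h \<in> Hom B C"
  shows "Dcomp X A B C f (lift X B C h) = (\<lambda>n. cmp (Pn n A) B C (f n) h)"
proof
  fix n
  have B: "B \<in> Ob" using h by (rule dom_ob)
  show "Dcomp X A B C f (lift X B C h) n = cmp (Pn n A) B C (f n) h"
    unfolding Dcomp_def lift_def
    using comp_assoc[OF Tn_0_hom[OF f, of n] Iseq_hom[OF B, of n] h, symmetric] Tn_Iseq[OF f, of 0 n]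
    by simp
qed

end

section \<open>Functoriality of \<open>T\<close> and associativity\<close>

context cartesian_category
begin

lemma Tseq_comp_Parr:
  assumes g: "g \<in> Dhom X A B" and h: "h \<in> Hom B C"
  shows "cmp (Pn (Suc j) A) (P B) (P C) (Tseq X A B g j) (Parr X B C h)
    = pair (Pn (Suc j) A) C C (cmp (Pn (Suc j) A) (Pn j A) C (Ppi0 j A) (cmp (Pn j A) B C (g j) h))
        (cmp (Pn (Suc j) A) B C (g (Suc j)) h)"
proof -
  have A: "A \<in> Ob" and B: "B \<in> Ob" using Dhom_ob[OF g] by auto
  have Tg: "Tseq X A B g j \<in> Hom (Pn (Suc j) A) (P B)" using Tseq_hom[OF g] by (simp add: Dhom_iff)
  have gj: "g j \<in> Hom (Pn j A) B" using g by (simp add: Dhom_iff)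
  have "cmp (Pn (Suc j) A) (P B) (P C) (Tseq X A B g j) (Parr X B C h)
     = pair (Pn (Suc j) A) C C (cmp (Pn (Suc j) A) (P B) C (Tseq X A B g j) (cmp (P B) B C (p0 B B) h))
          (cmp (Pn (Suc j) A) (P B) C (Tseq X A B g j) (cmp (P B) B C (p1 B B) h))"
    unfolding Parr_def[of X B C h] using Tg h B by (simp add: comp_pair_P comp_hom pi0_P_hom pi1_P_hom)
  also have "cmp (Pn (Suc j) A) (P B) C (Tseq X A B g j) (cmp (P B) B C (p0 B B) h)
     = cmp (Pn (Suc j) A) (Pn j A) C (Ppi0 j A) (cmp (Pn j A) B C (g j) h)"
    using comp_assoc[OF Tg pi0_P_hom[OF B] h, symmetric] Tseq_pi0[OF g, of j]
      comp_assoc[OF Ppi0_hom[OF A] gj h] by simp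
  also have "cmp (Pn (Suc j) A) (P B) C (Tseq X A B g j) (cmp (P B) B C (p1 B B) h)
     = cmp (Pn (Suc j) A) B C (g (Suc j)) h"
    using comp_assoc[OF Tg pi1_P_hom[OF B] h, symmetric] Tseq_pi1[OF g, of j] by simp
  finally show ?thesis .
qed

text \<open>\<open>P\<^sup>j\<close> applied to the naturality square of \<open>\<pi>\<^sub>0\<close> with respect to \<open>P\<^sup>k(\<pi>\<^sub>0)\<close>.\<close>
lemma Ppi0_interchange:
  assumes A: "A \<in> Ob"
  shows "cmp (Pn (Suc (Suc (j + k))) A) (Pn (Suc (j + k)) A) (Pn (j + k) A)
      (Pn_map j (Pn (Suc (Suc k)) A) (Pn (Suc k) A) (p0 (Pn (Suc k) A) (Pn (Suc k) A))) (Ppi0 (j + k) A)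
    = cmp (Pn (Suc (Suc (j + k))) A) (Pn (Suc (j + k)) A) (Pn (j + k) A)
      (Ppi0 (Suc (j + k)) A) (Pn_map j (Pn (Suc k) A) (Pn k A) (p0 (Pn k A) (Pn k A)))"
proof -
  let ?q = "Ppi0 k A"
  have q: "?q \<in> Hom (Pn (Suc k) A) (Pn k A)" using Ppi0_hom[OF A] .
  have Pq: "Parr X (Pn (Suc k) A) (Pn k A) ?q \<in> Hom (Pn (Suc (Suc k)) A) (Pn (Suc k) A)"
    using Parr_hom[OF q] by simp
  have "Ppi0 (j + k) A = Pn_map j (Pn (Suc k) A) (Pn k A) ?q"
    using Pn_arr_Pn_arr[of j k "P A" A "p0 A A"] by simp
  then have "cmp (Pn (Suc (Suc (j + k))) A) (Pn (Suc (j + k)) A) (Pn (j + k) A)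
      (Pn_map j (Pn (Suc (Suc k)) A) (Pn (Suc k) A) (p0 (Pn (Suc k) A) (Pn (Suc k) A))) (Ppi0 (j + k) A)
     = Pn_map j (Pn (Suc (Suc k)) A) (Pn k A)
         (cmp (Pn (Suc (Suc k)) A) (Pn (Suc k) A) (Pn k A) (p0 (Pn (Suc k) A) (Pn (Suc k) A)) ?q)"
    using Pn_arr_comp[OF pi0_Pn_hom[OF A] q, of j] by simp
  also have "\<dots> = Pn_map j (Pn (Suc (Suc k)) A) (Pn k A)
         (cmp (Pn (Suc (Suc k)) A) (Pn (Suc k) A) (Pn k A) (Parr X (Pn (Suc k) A) (Pn k A) ?q) (p0 (Pn k A) (Pn k A)))"
    using Parr_pi0[OF q] by simp
  also have "\<dots> = cmp (Pn (Suc (Suc (j + k))) A) (Pn (Suc (j + k)) A) (Pn (j + k) A)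
      (Ppi0 (Suc (j + k)) A) (Pn_map j (Pn (Suc k) A) (Pn k A) (p0 (Pn k A) (Pn k A)))"
    using Pn_arr_comp[OF Pq pi0_Pn_hom[OF A], of j] Pn_arr_Pn_arr[of j "Suc k" "P A" A "p0 A A"] by simp
  finally show ?thesis .
qed

text \<open>Naturality of \<open>\<pi>\<^sub>0 : T \<Rightarrow> Id\<close>, iterated: the only non-formal input to the functoriality of \<open>T\<close>.\<close>
lemma Tn_Tseq_Ppi0:
  assumes f: "f \<in> Dhom X A B"
  shows "cmp (Pn (Suc (j + k)) A) (Pn (Suc k) B) (Pn k B) (Tn X k (P A) (P B) (Tseq X A B f) j) (Ppi0 k B)
       = cmp (Pn (Suc (j + k)) A) (Pn (j + k) A) (Pn k B) (Ppi0 (j + k) A) (Tn X k A B f j)"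
proof (induction k arbitrary: j)
  case 0
  then show ?case using Tseq_pi0[OF f, of j] by simp
next
  case (Suc k)
  have A: "A \<in> Ob" and B: "B \<in> Ob" using Dhom_ob[OF f] by auto
  let ?N = "Pn (Suc (Suc (j + k))) A" and ?M = "Pn (Suc (j + k)) A"
  let ?t = "Tn X k A B f" and ?r = "Pn_map j (Pn (Suc k) A) (Pn k A) (p0 (Pn k A) (Pn k A))"
  have g: "Tn X k (P A) (P B) (Tseq X A B f) \<in> Dhom X (Pn (Suc k) A) (Pn (Suc k) B)"
    using Tn_hom[OF Tseq_hom[OF f], of k] by simp
  have tj: "?t j \<in> Hom (Pn (j + k) A) (Pn k B)" using Tn_component_hom[OF f] .
  have tSj: "?t (Suc j) \<in> Hom ?M (Pn k B)" using Tn_component_hom[OF f, of k "Suc j"] by simp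
  have r: "?r \<in> Hom ?M (Pn (j + k) A)" using Pn_arr_hom[OF pi0_Pn_hom[OF A], of j k] by simp
  have r': "Pn_map j (Pn (Suc (Suc k)) A) (Pn (Suc k) A) (p0 (Pn (Suc k) A) (Pn (Suc k) A)) \<in> Hom ?N ?M"
    using Pn_arr_hom[OF pi0_Pn_hom[OF A], of j "Suc k"] by simp
  have "cmp ?N (Pn (Suc (Suc k)) B) (Pn (Suc k) B) (Tn X (Suc k) (P A) (P B) (Tseq X A B f) j) (Ppi0 (Suc k) B)
     = pair ?N (Pn k B) (Pn k B)
         (cmp ?N ?M (Pn k B) (Pn_map j (Pn (Suc (Suc k)) A) (Pn (Suc k) A) (p0 (Pn (Suc k) A) (Pn (Suc k) A)))
            (cmp ?M (Pn (j + k) A) (Pn k B) (Ppi0 (j + k) A) (?t j)))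
         (cmp ?N ?M (Pn k B) (Ppi0 (Suc (j + k)) A) (?t (Suc j)))"
    using Tseq_comp_Parr[OF g Ppi0_hom[OF B], of j] Suc.IH[of j] Suc.IH[of "Suc j"] by simp
  also have "\<dots> = pair ?N (Pn k B) (Pn k B)
         (cmp ?N ?M (Pn k B) (Ppi0 (Suc (j + k)) A) (cmp ?M (Pn (j + k) A) (Pn k B) ?r (?t j)))
         (cmp ?N ?M (Pn k B) (Ppi0 (Suc (j + k)) A) (?t (Suc j)))"
    using comp_assoc[OF r' Ppi0_hom[OF A, of "j + k"] tj, symmetric]
      Ppi0_interchange[OF A, of j k] comp_assoc[OF Ppi0_hom[OF A, of "Suc (j + k)"] r tj]
    by simp
  also have "\<dots> = cmp ?N ?M (Pn (Suc k) B) (Ppi0 (Suc (j + k)) A) (Tseq X (Pn k A) (Pn k B) ?t j)"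
    unfolding Tseq_def using comp_pair_P[OF Ppi0_hom[OF A] comp_hom[OF r tj] tSj] by simp
  finally show ?case by simp
qed

lemma Tseq_Dcomp:
  assumes f: "f \<in> Dhom X A B" and g: "g \<in> Dhom X B C"
  shows "Tseq X A C (Dcomp X A B C f g) = Dcomp X (P A) (P B) (P C) (Tseq X A B f) (Tseq X B C g)"
proof
  fix k
  have A: "A \<in> Ob" and B: "B \<in> Ob" using Dhom_ob[OF f] by auto
  let ?f = "Tn X (Suc k) A B f 0"
  have f1: "?f \<in> Hom (Pn (Suc k) A) (Pn (Suc k) B)" using Tn_0_hom[OF f] .
  have gk: "g k \<in> Hom (Pn k B) C" and gSk: "g (Suc k) \<in> Hom (Pn (Suc k) B) C"
    using g by (auto simp: Dhom_iff)
  have "Dcomp X (P A) (P B) (P C) (Tseq X A B f) (Tseq X B C g) k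
      = cmp (Pn (Suc k) A) (Pn (Suc k) B) (P C) ?f (Tseq X B C g k)"
    by (simp add: Dcomp_def Tn_Tseq)
  also have "\<dots> = pair (Pn (Suc k) A) C C
          (cmp (Pn (Suc k) A) (Pn (Suc k) B) C ?f (cmp (Pn (Suc k) B) (Pn k B) C (Ppi0 k B) (g k)))
          (cmp (Pn (Suc k) A) (Pn (Suc k) B) C ?f (g (Suc k)))"
    unfolding Tseq_def[of X B C g] using comp_pair_P[OF f1 comp_hom[OF Ppi0_hom[OF B] gk] gSk] by simp
  also have "cmp (Pn (Suc k) A) (Pn (Suc k) B) C ?f (cmp (Pn (Suc k) B) (Pn k B) C (Ppi0 k B) (g k))
     = cmp (Pn (Suc k) A) (Pn k A) C (Ppi0 k A) (cmp (Pn k A) (Pn k B) C (Tn X k A B f 0) (g k))"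
    using comp_assoc[OF f1 Ppi0_hom[OF B] gk, symmetric] Tn_Tseq_Ppi0[OF f, of 0 k] Tn_Tseq[of X k A B f]
      comp_assoc[OF Ppi0_hom[OF A] Tn_0_hom[OF f] gk] by simp
  finally show "Tseq X A C (Dcomp X A B C f g) k = Dcomp X (P A) (P B) (P C) (Tseq X A B f) (Tseq X B C g) k"
    unfolding Tseq_def Dcomp_def by simp
qed

lemma Tn_Dcomp:
  "f \<in> Dhom X A B \<Longrightarrow> g \<in> Dhom X B C \<Longrightarrow>
   Tn X n A C (Dcomp X A B C f g) = Dcomp X (Pn n A) (Pn n B) (Pn n C) (Tn X n A B f) (Tn X n B C g)"
  by (induction n) (simp_all add: Tseq_Dcomp Tn_hom)

lemma Dcomp_assoc:
  assumes f: "f \<in> Dhom X A B" and g: "g \<in> Dhom X B C" and h: "h \<in> Dhom X C D"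
  shows "Dcomp X A C D (Dcomp X A B C f g) h = Dcomp X A B D f (Dcomp X B C D g h)"
proof
  fix n
  have "Tn X n A C (Dcomp X A B C f g) 0 = cmp (Pn n A) (Pn n B) (Pn n C) (Tn X n A B f 0) (Tn X n B C g 0)"
    using Tn_Dcomp[OF f g, of n] by (simp add: Dcomp_def)
  then show "Dcomp X A C D (Dcomp X A B C f g) h n = Dcomp X A B D f (Dcomp X B C D g h) n"
    unfolding Dcomp_def using comp_assoc[OF Tn_0_hom[OF f, of n] Tn_0_hom[OF g, of n]] h
    by (simp add: Dhom_iff)
qed

end

section \<open>\<open>Dbar X\<close> is a Cartesian left additive category\<close>

lemma Dbar_simps:
  "cOb (Dbar X) = cOb X"
  "cHom (Dbar X) A B = Dhom X A B"
  "cId (Dbar X) = Iseq X"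
  "cComp (Dbar X) = Dcomp X"
  "cProd (Dbar X) = cProd X"
  "cPi0 (Dbar X) A B = lift X (cProd X A B) A (cPi0 X A B)"
  "cPi1 (Dbar X) A B = lift X (cProd X A B) B (cPi1 X A B)"
  "cPair (Dbar X) C A B f g = (\<lambda>n. cPair X (Pn_obj X n C) A B (f n) (g n))"
  "cTerm (Dbar X) = cTerm X"
  "cBang (Dbar X) A = (\<lambda>n. cBang X (Pn_obj X n A))"
  "cAdd (Dbar X) A B f g = (\<lambda>n. cAdd X (Pn_obj X n A) B (f n) (g n))"
  "cZero (Dbar X) A B = (\<lambda>n. cZero X (Pn_obj X n A) B)"
  by (auto simp: Dbar_def Dhom_def Dcomp_def lift_def fun_eq_iff)

context cartesian_category
begin

lemma is_category_Dbar: "is_category (Dbar X)"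
  unfolding is_category_def Dbar_simps
proof (intro conjI allI impI ballI)
  fix A B f assume "f \<in> Dhom X A B"
  then show "A \<in> Ob" "B \<in> Ob" using Dhom_ob by auto
next
  fix A B A' B' f assume "f \<in> Dhom X A B" "f \<in> Dhom X A' B'"
  then show "A = A'" "B = B'" using Dhom_0 hom_unique by blast+
qed (simp_all add: Iseq_Dhom Dcomp_hom Dcomp_Iseq_left Dcomp_Iseq_right Dcomp_assoc)

lemma has_finite_products_Dbar: "has_finite_products (Dbar X)"
  unfolding has_finite_products_def Dbar_simps
proof (intro conjI allI impI ballI)
  fix A B assume "A \<in> Ob" "B \<in> Ob"
  then show "cProd X A B \<in> Ob"
    and "lift X (cProd X A B) A (p0 A B) \<in> Dhom X (cProd X A B) A"
    and "lift X (cProd X A B) B (p1 A B) \<in> Dhom X (cProd X A B) B"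
    by (auto intro: lift_hom)
next
  fix C A B f g assume f: "f \<in> Dhom X C A" and g: "g \<in> Dhom X C B"
  have A: "A \<in> Ob" and B: "B \<in> Ob" using Dhom_ob f g by auto
  have fn: "\<And>n. f n \<in> Hom (Pn n C) A" and gn: "\<And>n. g n \<in> Hom (Pn n C) B"
    using f g by (auto simp: Dhom_iff)
  show fg: "(\<lambda>n. pair (Pn n C) A B (f n) (g n)) \<in> Dhom X C (cProd X A B)"
    using fn gn by (simp add: Dhom_iff pair_hom)
  show "Dcomp X C (cProd X A B) A (\<lambda>n. pair (Pn n C) A B (f n) (g n)) (lift X (cProd X A B) A (p0 A B)) = f"
    using Dcomp_lift_right[OF fg pi0_hom[OF A B]] pair_pi0[OF fn gn] by simp
  show "Dcomp X C (cProd X A B) B (\<lambda>n. pair (Pn n C) A B (f n) (g n)) (lift X (cProd X A B) B (p1 A B)) = g"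
    using Dcomp_lift_right[OF fg pi1_hom[OF A B]] pair_pi1[OF fn gn] by simp
next
  fix C A B h assume A: "A \<in> Ob" and B: "B \<in> Ob" and h: "h \<in> Dhom X C (cProd X A B)"
  have "\<And>n. h n \<in> Hom (Pn n C) (cProd X A B)" using h by (auto simp: Dhom_iff)
  then show "(\<lambda>n. pair (Pn n C) A B (Dcomp X C (cProd X A B) A h (lift X (cProd X A B) A (p0 A B)) n)
             (Dcomp X C (cProd X A B) B h (lift X (cProd X A B) B (p1 A B)) n)) = h"
    using Dcomp_lift_right[OF h pi0_hom[OF A B]] Dcomp_lift_right[OF h pi1_hom[OF A B]] pair_eta A B
    by simp
qed (auto simp: Dhom_iff fun_eq_iff term_ob bang_hom Pn_obj_ob intro: bang_unique)

end

context clac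
begin

lemma is_left_additive_Dbar: "is_left_additive (Dbar X)"
  unfolding is_left_additive_def Dbar_simps
proof (intro conjI allI impI ballI)
  fix A B C f g h assume f: "f \<in> Dhom X A B" and "g \<in> Dhom X B C" "h \<in> Dhom X B C"
  then show "Dcomp X A B C f (\<lambda>n. cAdd X (Pn n B) C (g n) (h n))
           = (\<lambda>n. cAdd X (Pn n A) C (Dcomp X A B C f g n) (Dcomp X A B C f h n))"
    unfolding Dcomp_def using Tn_0_hom[OF f] by (simp add: Dhom_iff comp_add)
next
  fix A B C f assume f: "f \<in> Dhom X A B" and "C \<in> Ob"
  then show "Dcomp X A B C f (\<lambda>n. cZero X (Pn n B) C) = (\<lambda>n. cZero X (Pn n A) C)"
    unfolding Dcomp_def using Tn_0_hom[OF f] by (simp add: comp_zero)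
next
  fix C A B f g assume A: "A \<in> Ob" and B: "B \<in> Ob"
    and f: "f \<in> Dhom X C (cProd X A B)" and g: "g \<in> Dhom X C (cProd X A B)"
  have fg: "(\<lambda>n. cAdd X (Pn n C) (cProd X A B) (f n) (g n)) \<in> Dhom X C (cProd X A B)"
    using f g by (simp add: Dhom_iff add_hom)
  have "\<And>n. f n \<in> Hom (Pn n C) (cProd X A B)" "\<And>n. g n \<in> Hom (Pn n C) (cProd X A B)"
    using f g by (auto simp: Dhom_iff)
  then show "Dcomp X C (cProd X A B) A (\<lambda>n. cAdd X (Pn n C) (cProd X A B) (f n) (g n)) (lift X (cProd X A B) A (p0 A B))
      = (\<lambda>n. cAdd X (Pn n C) A (Dcomp X C (cProd X A B) A f (lift X (cProd X A B) A (p0 A B)) n)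
                                (Dcomp X C (cProd X A B) A g (lift X (cProd X A B) A (p0 A B)) n))"
    and "Dcomp X C (cProd X A B) B (\<lambda>n. cAdd X (Pn n C) (cProd X A B) (f n) (g n)) (lift X (cProd X A B) B (p1 A B))
      = (\<lambda>n. cAdd X (Pn n C) B (Dcomp X C (cProd X A B) B f (lift X (cProd X A B) B (p1 A B)) n)
                                (Dcomp X C (cProd X A B) B g (lift X (cProd X A B) B (p1 A B)) n))"
    using Dcomp_lift_right[OF fg pi0_hom[OF A B]] Dcomp_lift_right[OF f pi0_hom[OF A B]]
      Dcomp_lift_right[OF g pi0_hom[OF A B]] Dcomp_lift_right[OF fg pi1_hom[OF A B]]
      Dcomp_lift_right[OF f pi1_hom[OF A B]] Dcomp_lift_right[OF g pi1_hom[OF A B]] A B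
    by (simp_all add: add_pi0 add_pi1)
next
  fix C A B assume C: "C \<in> Ob" and A: "A \<in> Ob" and B: "B \<in> Ob"
  have z: "(\<lambda>n. cZero X (Pn n C) (cProd X A B)) \<in> Dhom X C (cProd X A B)"
    using A B C by (simp add: Dhom_iff zero_hom Pn_obj_ob prod_ob)
  show "Dcomp X C (cProd X A B) A (\<lambda>n. cZero X (Pn n C) (cProd X A B)) (lift X (cProd X A B) A (p0 A B))
      = (\<lambda>n. cZero X (Pn n C) A)"
    and "Dcomp X C (cProd X A B) B (\<lambda>n. cZero X (Pn n C) (cProd X A B)) (lift X (cProd X A B) B (p1 A B))
      = (\<lambda>n. cZero X (Pn n C) B)"
    using Dcomp_lift_right[OF z pi0_hom[OF A B]] Dcomp_lift_right[OF z pi1_hom[OF A B]] A B C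
    by (simp_all add: zero_pi0 zero_pi1 Pn_obj_ob)
qed (auto simp: Dhom_iff add_assoc add_commute add_zero Pn_obj_ob)

lemma is_clac_Dbar: "is_clac (Dbar X)"
  using is_category_Dbar has_finite_products_Dbar is_left_additive_Dbar by (simp add: is_clac_def)

end

section \<open>Counit and comultiplication\<close>

definition Dshifts :: "(nat \<Rightarrow> 'a) \<Rightarrow> nat \<Rightarrow> nat \<Rightarrow> 'a" where
  "Dshifts f = (\<lambda>n k. f (k + n))"

lemma Dshift_funpow: "(Dshift ^^ n) f = (\<lambda>k. f (k + n))"
  by (induction n) (simp_all add: Dshift_def)

lemma snd_delta_bar: "snd delta_bar f = Dshifts f"
  by (simp add: delta_bar_def Dshifts_def Dshift_funpow fun_eq_iff)

lemma Pobj_Dbar [simp]: "Pobj (Dbar X) = Pobj X"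
  by (simp add: fun_eq_iff Pobj_def Dbar_simps del: cProd_self)

lemma Pn_obj_Dbar [simp]: "Pn_obj (Dbar X) = Pn_obj X"
  by (simp add: fun_eq_iff Pn_obj_def)

context cartesian_category
begin

lemma lift_comp:
  assumes a: "a \<in> Hom A B" and b: "b \<in> Hom B C"
  shows "Dcomp X A B C (lift X A B a) (lift X B C b) = lift X A C (cmp A B C a b)"
proof
  fix n
  have A: "A \<in> Ob" and B: "B \<in> Ob" using a by (auto intro: dom_ob cod_ob)
  show "Dcomp X A B C (lift X A B a) (lift X B C b) n = lift X A C (cmp A B C a b) n"
    unfolding Dcomp_def Tn_lift_0[OF a] unfolding lift_def
    using comp_assoc[OF Pn_arr_hom[OF a, of n] Iseq_hom[OF B, of n] b, symmetric] Iseq_natural[OF a, of n]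
      comp_assoc[OF Iseq_hom[OF A, of n] a b] by simp
qed

lemma lift_pair:
  assumes a: "a \<in> Hom C A" and b: "b \<in> Hom C B"
  shows "(\<lambda>n. pair (Pn n C) A B (lift X C A a n) (lift X C B b n)) = lift X C (cProd X A B) (pair C A B a b)"
  unfolding lift_def using comp_pair[OF Iseq_hom[OF dom_ob[OF a]] a b] by simp

lemma Parr_Dbar_lift:
  assumes h: "h \<in> Hom A B"
  shows "Parr (Dbar X) A B (lift X A B h) = lift X (P A) (P B) (Parr X A B h)"
proof -
  have A: "A \<in> Ob" using h by (rule dom_ob)
  have "Parr (Dbar X) A B (lift X A B h) = (\<lambda>n. pair (Pn n (P A)) B B
          (lift X (P A) B (cmp (P A) A B (p0 A A) h) n) (lift X (P A) B (cmp (P A) A B (p1 A A) h) n))"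
    unfolding Parr_def Dbar_simps using lift_comp[OF pi0_P_hom[OF A] h] lift_comp[OF pi1_P_hom[OF A] h]
    by simp
  also have "\<dots> = lift X (P A) (P B) (Parr X A B h)"
    unfolding Parr_def using lift_pair[OF comp_hom[OF pi0_P_hom[OF A] h] comp_hom[OF pi1_P_hom[OF A] h]]
    by simp
  finally show ?thesis .
qed

lemma Pn_arr_Dbar_lift:
  "h \<in> Hom A B \<Longrightarrow> Pn_arr (Dbar X) n A B (lift X A B h) = lift X (Pn n A) (Pn n B) (Pn_map n A B h)"
  by (induction n) (simp_all add: Parr_Dbar_lift Pn_arr_hom)

lemma Iseq_Dbar: "A \<in> Ob \<Longrightarrow> Iseq (Dbar X) A n = (\<lambda>k. Iseq X A (k + n))"
proof (induction n)
  case 0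
  then show ?case by (simp add: Dbar_simps)
next
  case (Suc n)
  have A: "A \<in> Ob" by fact
  let ?p = "p1 (Pn n A) (Pn n A)"
  have G: "(\<lambda>k. Iseq X A (k + n)) \<in> Dhom X (Pn n A) A" using Iseq_hom[OF A] by (simp add: Dhom_iff)
  have "Iseq (Dbar X) A (Suc n)
      = Dcomp X (Pn (Suc n) A) (Pn n A) A (lift X (Pn (Suc n) A) (Pn n A) ?p) (\<lambda>k. Iseq X A (k + n))"
    using Suc by (simp add: Dbar_simps)
  also have "\<dots> = (\<lambda>k. Iseq X A (k + Suc n))"
  proof
    fix k
    have IP: "Iseq X (Pn n A) k \<in> Hom (Pn (k + n) A) (Pn n A)" using Iseq_hom[of "Pn n A" k] A by auto
    have IP': "Iseq X (Pn (Suc n) A) k \<in> Hom (Pn (Suc (k + n)) A) (Pn (Suc n) A)"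
      using Iseq_hom[of "Pn (Suc n) A" k] A by auto
    have Pp: "Pn_map k (Pn (Suc n) A) (Pn n A) ?p \<in> Hom (Pn (Suc (k + n)) A) (Pn (k + n) A)"
      using Pn_arr_hom[OF pi1_Pn_hom[OF A], of k] by simp
    have "Dcomp X (Pn (Suc n) A) (Pn n A) A (lift X (Pn (Suc n) A) (Pn n A) ?p) (\<lambda>k. Iseq X A (k + n)) k
       = cmp (Pn (Suc (k + n)) A) (Pn (k + n) A) A (Pn_map k (Pn (Suc n) A) (Pn n A) ?p)
            (cmp (Pn (k + n) A) (Pn n A) A (Iseq X (Pn n A) k) (Iseq X A n))"
      using Dcomp_lift_left[OF pi1_Pn_hom[OF A]] Iseq_add[OF A, of k n] by simp
    also have "\<dots> = cmp (Pn (Suc (k + n)) A) (Pn (Suc n) A) A (Iseq X (Pn (Suc n) A) k)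
            (cmp (Pn (Suc n) A) (Pn n A) A ?p (Iseq X A n))"
      using comp_assoc[OF Pp IP Iseq_hom[OF A, of n], symmetric] Iseq_natural[OF pi1_Pn_hom[OF A], of k]
        comp_assoc[OF IP' pi1_Pn_hom[OF A] Iseq_hom[OF A, of n]] by simp
    also have "\<dots> = Iseq X A (k + Suc n)"
      using Iseq_add[OF A, of k "Suc n"] by simp
    finally show "Dcomp X (Pn (Suc n) A) (Pn n A) A (lift X (Pn (Suc n) A) (Pn n A) ?p) (\<lambda>k. Iseq X A (k + n)) k
       = Iseq X A (k + Suc n)" .
  qed
  finally show ?case .
qed

lemma Dshifts_hom: "f \<in> Dhom X A B \<Longrightarrow> Dshifts f \<in> Dhom (Dbar X) A B"
  by (simp add: Dhom_iff Dshifts_def Dbar_simps)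

lemma Tseq_Dbar_Dshifts:
  assumes f: "f \<in> Dhom X A B"
  shows "Tseq (Dbar X) A B (Dshifts f) = Dshifts (Tseq X A B f)"
proof (rule ext)+
  fix m k
  have A: "A \<in> Ob" using Dhom_ob[OF f] by auto
  have G: "(\<lambda>k. f (k + m)) \<in> Dhom X (Pn m A) B" using f by (simp add: Dhom_iff)
  have "Tseq (Dbar X) A B (Dshifts f) m k = pair (Pn (Suc (k + m)) A) B B
      (Dcomp X (Pn (Suc m) A) (Pn m A) B (lift X (Pn (Suc m) A) (Pn m A) (Ppi0 m A)) (\<lambda>k. f (k + m)) k)
      (f (Suc (k + m)))"
    unfolding Tseq_def by (simp add: Dbar_simps Dshifts_def Pn_arr_Dbar_lift[OF pi0_P_hom[OF A]])
  also have "\<dots> = Dshifts (Tseq X A B f) m k"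
    unfolding Dcomp_lift_left[OF Ppi0_hom[OF A]] using Pn_arr_Pn_arr[of k m "P A" A "p0 A A"]
    by (simp add: Dshifts_def Tseq_def)
  finally show "Tseq (Dbar X) A B (Dshifts f) m k = Dshifts (Tseq X A B f) m k" .
qed

lemma Tn_Dbar_Dshifts: "f \<in> Dhom X A B \<Longrightarrow> Tn (Dbar X) n A B (Dshifts f) = Dshifts (Tn X n A B f)"
  by (induction n) (simp_all add: Tseq_Dbar_Dshifts Tn_hom)

lemma Dcomp_Dbar_Dshifts:
  assumes f: "f \<in> Dhom X A B"
  shows "Dcomp (Dbar X) A B C (Dshifts f) (Dshifts g) = Dshifts (Dcomp X A B C f g)"
proof (rule ext)+
  fix n k
  have "Dcomp (Dbar X) A B C (Dshifts f) (Dshifts g) n k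
      = Dcomp X (Pn n A) (Pn n B) C (Tn X n A B f) (\<lambda>k. g (k + n)) k"
    unfolding Dcomp_def[of "Dbar X"] Tn_Dbar_Dshifts[OF f] by (simp add: Dbar_simps Dshifts_def)
  also have "\<dots> = Dshifts (Dcomp X A B C f g) n k"
    by (simp add: Dcomp_def Dshifts_def Tn_Tn)
  finally show "Dcomp (Dbar X) A B C (Dshifts f) (Dshifts g) n k = Dshifts (Dcomp X A B C f g) n k" .
qed

lemma lift_Dbar_lift:
  assumes h: "h \<in> Hom A B"
  shows "lift (Dbar X) A B (lift X A B h) = Dshifts (lift X A B h)"
proof
  fix n
  have A: "A \<in> Ob" using h by (rule dom_ob)
  have "(\<lambda>k. Iseq X A (k + n)) \<in> Dhom X (Pn n A) A" using Iseq_hom[OF A] by (simp add: Dhom_iff)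
  then show "lift (Dbar X) A B (lift X A B h) n = Dshifts (lift X A B h) n"
    unfolding lift_def[of "Dbar X"] using Dcomp_lift_right[OF _ h] Iseq_Dbar[OF A, of n]
    by (simp add: Dbar_simps Dshifts_def lift_def)
qed

lemma delta_bar_clac_hom: "clac_hom (Dbar X) (Dbar (Dbar X)) delta_bar"
  unfolding clac_hom_def snd_delta_bar
proof (intro conjI allI impI ballI)
  fix A B f assume "f \<in> cHom (Dbar X) A B"
  then show "Dshifts f \<in> cHom (Dbar (Dbar X)) (fst delta_bar A) (fst delta_bar B)"
    by (simp add: delta_bar_def Dbar_simps Dshifts_hom)
next
  fix A B C f g assume "f \<in> cHom (Dbar X) A B"
  then show "Dshifts (cComp (Dbar X) A B C f g)
      = cComp (Dbar (Dbar X)) (fst delta_bar A) (fst delta_bar B) (fst delta_bar C) (Dshifts f) (Dshifts g)"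
    by (simp add: delta_bar_def Dbar_simps Dcomp_Dbar_Dshifts)
next
  fix A B assume "A \<in> cOb (Dbar X)" "B \<in> cOb (Dbar X)"
  then have A: "A \<in> Ob" and B: "B \<in> Ob" by (simp_all add: Dbar_simps)
  show "Dshifts (cPi0 (Dbar X) A B) = cPi0 (Dbar (Dbar X)) (fst delta_bar A) (fst delta_bar B)"
    and "Dshifts (cPi1 (Dbar X) A B) = cPi1 (Dbar (Dbar X)) (fst delta_bar A) (fst delta_bar B)"
    using lift_Dbar_lift[OF pi0_hom[OF A B]] lift_Dbar_lift[OF pi1_hom[OF A B]]
    by (simp_all add: delta_bar_def Dbar_simps)
qed (auto simp: delta_bar_def Dbar_simps Iseq_Dbar Dshifts_def fun_eq_iff)

lemma eps_bar_clac_hom: "clac_hom (Dbar X) X eps_bar"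
  unfolding clac_hom_def eps_bar_def Dbar_simps
  by (auto simp: Dhom_0 Dcomp_def lift_def id_left pi0_hom pi1_hom)

end

section \<open>Functoriality of \<open>Dbar\<close>\<close>

locale clac_morphism = X: cartesian_category X + Y: cartesian_category Y
  for X :: "('o, 'a, 'z) clac_sig_scheme" and Y :: "('p, 'b, 'w) clac_sig_scheme" +
  fixes F :: "('o, 'a, 'p, 'b) cfunctor"
  assumes clac_hom: "clac_hom X Y F"
begin

abbreviation "Fo \<equiv> fst F"
abbreviation "Fa \<equiv> snd F"

lemma map_ob: "A \<in> cOb X \<Longrightarrow> Fo A \<in> cOb Y"
  using clac_hom unfolding clac_hom_def by metis
lemma map_hom: "f \<in> cHom X A B \<Longrightarrow> Fa f \<in> cHom Y (Fo A) (Fo B)"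
  using clac_hom unfolding clac_hom_def by metis
lemma map_id: "A \<in> cOb X \<Longrightarrow> Fa (cId X A) = cId Y (Fo A)"
  using clac_hom unfolding clac_hom_def by metis
lemma map_comp: "f \<in> cHom X A B \<Longrightarrow> g \<in> cHom X B C \<Longrightarrow>
   Fa (cComp X A B C f g) = cComp Y (Fo A) (Fo B) (Fo C) (Fa f) (Fa g)"
  using clac_hom unfolding clac_hom_def by metis
lemma map_prod: "A \<in> cOb X \<Longrightarrow> B \<in> cOb X \<Longrightarrow> Fo (cProd X A B) = cProd Y (Fo A) (Fo B)"
  using clac_hom unfolding clac_hom_def by metis
lemma map_pi0: "A \<in> cOb X \<Longrightarrow> B \<in> cOb X \<Longrightarrow> Fa (cPi0 X A B) = cPi0 Y (Fo A) (Fo B)"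
  using clac_hom unfolding clac_hom_def by metis
lemma map_pi1: "A \<in> cOb X \<Longrightarrow> B \<in> cOb X \<Longrightarrow> Fa (cPi1 X A B) = cPi1 Y (Fo A) (Fo B)"
  using clac_hom unfolding clac_hom_def by metis
lemma map_term: "Fo (cTerm X) = cTerm Y"
  using clac_hom unfolding clac_hom_def by metis
lemma map_add: "f \<in> cHom X A B \<Longrightarrow> g \<in> cHom X A B \<Longrightarrow>
   Fa (cAdd X A B f g) = cAdd Y (Fo A) (Fo B) (Fa f) (Fa g)"
  using clac_hom unfolding clac_hom_def by metis
lemma map_zero: "A \<in> cOb X \<Longrightarrow> B \<in> cOb X \<Longrightarrow> Fa (cZero X A B) = cZero Y (Fo A) (Fo B)"
  using clac_hom unfolding clac_hom_def by metis

lemma map_pair: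
  assumes f: "f \<in> cHom X C A" and g: "g \<in> cHom X C B"
  shows "Fa (cPair X C A B f g) = cPair Y (Fo C) (Fo A) (Fo B) (Fa f) (Fa g)"
proof (rule Y.pair_unique)
  have A: "A \<in> cOb X" and B: "B \<in> cOb X" using f g by (auto intro: X.cod_ob)
  have fg: "cPair X C A B f g \<in> cHom X C (cProd X A B)" using f g by blast
  show "Fa (cPair X C A B f g) \<in> cHom Y (Fo C) (cProd Y (Fo A) (Fo B))"
    using map_hom[OF fg] map_prod[OF A B] by simp
  show "Fo A \<in> cOb Y" "Fo B \<in> cOb Y" using map_ob A B by auto
  show "cComp Y (Fo C) (cProd Y (Fo A) (Fo B)) (Fo A) (Fa (cPair X C A B f g)) (cPi0 Y (Fo A) (Fo B)) = Fa f"
    using map_comp[OF fg X.pi0_hom[OF A B]] map_prod[OF A B] map_pi0[OF A B] X.pair_pi0[OF f g] by simp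
  show "cComp Y (Fo C) (cProd Y (Fo A) (Fo B)) (Fo B) (Fa (cPair X C A B f g)) (cPi1 Y (Fo A) (Fo B)) = Fa g"
    using map_comp[OF fg X.pi1_hom[OF A B]] map_prod[OF A B] map_pi1[OF A B] X.pair_pi1[OF f g] by simp
qed

lemma map_Pobj: "A \<in> cOb X \<Longrightarrow> Fo (Pobj X A) = Pobj Y (Fo A)"
  using map_prod[of A A] by simp

lemma map_Pn_obj: "A \<in> cOb X \<Longrightarrow> Fo (Pn_obj X n A) = Pn_obj Y n (Fo A)"
proof (induction n)
  case (Suc n)
  then show ?case using map_Pobj[OF X.Pn_obj_ob[OF Suc.prems, of n]] by simp
qed simp

lemma map_Parr:
  assumes f: "f \<in> cHom X A B"
  shows "Fa (Parr X A B f) = Parr Y (Fo A) (Fo B) (Fa f)"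
proof -
  have A: "A \<in> cOb X" using f by (rule X.dom_ob)
  have "cComp X (Pobj X A) A B (cPi0 X A A) f \<in> cHom X (Pobj X A) B"
    and "cComp X (Pobj X A) A B (cPi1 X A A) f \<in> cHom X (Pobj X A) B"
    using f A by blast+
  then show ?thesis unfolding Parr_def
    using map_comp[OF X.pi0_P_hom[OF A] f] map_comp[OF X.pi1_P_hom[OF A] f]
      map_Pobj[OF A] map_pi0[OF A A] map_pi1[OF A A]
    by (simp add: map_pair)
qed

lemma map_Pn_arr: "f \<in> cHom X A B \<Longrightarrow> Fa (Pn_arr X n A B f) = Pn_arr Y n (Fo A) (Fo B) (Fa f)"
proof (induction n)
  case (Suc n)
  have "A \<in> cOb X" "B \<in> cOb X" using Suc.prems by (auto intro: X.dom_ob X.cod_ob)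
  then show ?case using map_Parr[OF X.Pn_arr_hom[OF Suc.prems, of n]] Suc map_Pn_obj by simp
qed simp

lemma map_Iseq: "A \<in> cOb X \<Longrightarrow> Fa (Iseq X A n) = Iseq Y (Fo A) n"
proof (induction n)
  case (Suc n)
  then show ?case
    using map_comp[OF X.pi1_Pn_hom[OF Suc.prems, of n] X.Iseq_hom[OF Suc.prems, of n]] map_Pn_obj[OF Suc.prems]
      map_pi1[OF X.Pn_obj_ob X.Pn_obj_ob, OF Suc.prems Suc.prems]
    by simp
qed (simp add: map_id)

lemma map_Dhom: "f \<in> Dhom X A B \<Longrightarrow> (\<lambda>k. Fa (f k)) \<in> Dhom Y (Fo A) (Fo B)"
proof -
  assume f: "f \<in> Dhom X A B"
  have "f n \<in> cHom X (Pn_obj X n A) B" for n using f by (simp add: Dhom_iff)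
  then show ?thesis using map_hom map_Pn_obj X.Dhom_ob[OF f] by (metis Dhom_iff)
qed

lemma map_Tseq:
  assumes g: "g \<in> Dhom X A B"
  shows "Fa (Tseq X A B g k) = Tseq Y (Fo A) (Fo B) (\<lambda>k. Fa (g k)) k"
proof -
  have A: "A \<in> cOb X" using X.Dhom_ob[OF g] by blast
  have gk: "g k \<in> cHom X (Pn_obj X k A) B" and gSk: "g (Suc k) \<in> cHom X (Pn_obj X (Suc k) A) B"
    using g by (auto simp: Dhom_iff)
  show ?thesis unfolding Tseq_def
    using map_pair[OF X.comp_hom[OF X.Ppi0_hom[OF A] gk] gSk] map_comp[OF X.Ppi0_hom[OF A] gk]
      map_Pn_obj[OF A] map_Pn_arr[OF X.pi0_P_hom[OF A], of k] map_Pobj[OF A] map_pi0[OF A A]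
    by simp
qed

lemma map_Tn: "f \<in> Dhom X A B \<Longrightarrow> (\<lambda>k. Fa (Tn X n A B f k)) = Tn Y n (Fo A) (Fo B) (\<lambda>k. Fa (f k))"
proof (induction n)
  case (Suc n)
  have "A \<in> cOb X" "B \<in> cOb X" using X.Dhom_ob[OF Suc.prems] by auto
  then show ?case using map_Tseq[OF X.Tn_hom[OF Suc.prems, of n]] Suc map_Pn_obj by simp
qed simp

lemma map_Dcomp:
  assumes f: "f \<in> Dhom X A B" and g: "g \<in> Dhom X B C"
  shows "(\<lambda>n. Fa (Dcomp X A B C f g n)) = Dcomp Y (Fo A) (Fo B) (Fo C) (\<lambda>n. Fa (f n)) (\<lambda>n. Fa (g n))"
proof
  fix n
  have A: "A \<in> cOb X" and B: "B \<in> cOb X" using X.Dhom_ob[OF f] by auto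
  have "Fa (Tn X n A B f 0) = Tn Y n (Fo A) (Fo B) (\<lambda>k. Fa (f k)) 0" using map_Tn[OF f, of n] by metis
  then show "Fa (Dcomp X A B C f g n) = Dcomp Y (Fo A) (Fo B) (Fo C) (\<lambda>n. Fa (f n)) (\<lambda>n. Fa (g n)) n"
    unfolding Dcomp_def using map_comp[OF X.Tn_0_hom[OF f, of n], of "g n" C] g map_Pn_obj[OF A] map_Pn_obj[OF B]
    by (simp add: Dhom_iff)
qed

lemma map_lift:
  assumes h: "h \<in> cHom X A B"
  shows "(\<lambda>n. Fa (lift X A B h n)) = lift Y (Fo A) (Fo B) (Fa h)"
  unfolding lift_def using map_comp[OF X.Iseq_hom h] map_Iseq map_Pn_obj X.dom_ob[OF h] by simp

lemma Dbar_map_clac_hom: "clac_hom (Dbar X) (Dbar Y) (Dbar_map F)"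
  unfolding clac_hom_def Dbar_map_def Dbar_simps fst_conv snd_conv
proof (intro conjI allI impI ballI)
  fix A B assume A: "A \<in> cOb X" and B: "B \<in> cOb X"
  then show "(\<lambda>n. Fa (lift X (cProd X A B) A (cPi0 X A B) n)) = lift Y (cProd Y (Fo A) (Fo B)) (Fo A) (cPi0 Y (Fo A) (Fo B))"
    and "(\<lambda>n. Fa (lift X (cProd X A B) B (cPi1 X A B) n)) = lift Y (cProd Y (Fo A) (Fo B)) (Fo B) (cPi1 Y (Fo A) (Fo B))"
    using map_lift[OF X.pi0_hom[OF A B]] map_lift[OF X.pi1_hom[OF A B]] map_prod map_pi0 map_pi1 by simp_all
next
  fix A B f g assume "f \<in> Dhom X A B" "g \<in> Dhom X A B"
  then show "(\<lambda>n. Fa (cAdd X (Pn_obj X n A) B (f n) (g n))) = (\<lambda>n. cAdd Y (Pn_obj Y n (Fo A)) (Fo B) (Fa (f n)) (Fa (g n)))"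
    using map_add map_Pn_obj X.Dhom_ob by (simp add: Dhom_iff)
next
  fix A assume "A \<in> cOb X"
  then show "Fo A \<in> cOb Y" by (rule map_ob)
next
  fix A B f assume "f \<in> Dhom X A B"
  then show "(\<lambda>n. Fa (f n)) \<in> Dhom Y (Fo A) (Fo B)" by (rule map_Dhom)
next
  fix A assume "A \<in> cOb X"
  then show "(\<lambda>n. Fa (Iseq X A n)) = Iseq Y (Fo A)" by (simp add: map_Iseq fun_eq_iff)
next
  fix A B C f g assume "f \<in> Dhom X A B" "g \<in> Dhom X B C"
  then show "(\<lambda>n. Fa (Dcomp X A B C f g n)) = Dcomp Y (Fo A) (Fo B) (Fo C) (\<lambda>n. Fa (f n)) (\<lambda>n. Fa (g n))"
    by (rule map_Dcomp)
next
  fix A B assume "A \<in> cOb X" "B \<in> cOb X"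
  then show "Fo (cProd X A B) = cProd Y (Fo A) (Fo B)" by (rule map_prod)
next
  show "Fo (cTerm X) = cTerm Y" by (rule map_term)
next
  fix A B assume A: "A \<in> cOb X" and "B \<in> cOb X"
  then show "(\<lambda>n. Fa (cZero X (Pn_obj X n A) B)) = (\<lambda>n. cZero Y (Pn_obj Y n (Fo A)) (Fo B))"
    using map_zero[OF X.Pn_obj_ob[OF A]] map_Pn_obj[OF A] by simp
qed

end

section \<open>Naturality and the comonad laws\<close>

lemma Dbar_map_fid: "Dbar_map fid = fid"
  by (simp add: Dbar_map_def fid_def id_def)

lemma Dbar_map_ffcomp: "Dbar_map (ffcomp F G) = ffcomp (Dbar_map F) (Dbar_map G)"
  by (simp add: Dbar_map_def ffcomp_def comp_def)

lemma eps_bar_natural: "ffcomp (Dbar_map F) eps_bar = ffcomp eps_bar F"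
  by (simp add: Dbar_map_def ffcomp_def eps_bar_def comp_def)

lemma delta_bar_natural: "ffcomp (Dbar_map F) delta_bar = ffcomp delta_bar (Dbar_map (Dbar_map F))"
  by (simp add: Dbar_map_def ffcomp_def delta_bar_def Dshift_funpow comp_def)

lemma delta_bar_eps_bar: "ffcomp delta_bar eps_bar = fid"
  by (simp add: ffcomp_def delta_bar_def eps_bar_def fid_def id_def comp_def)

lemma delta_bar_Dbar_map_eps_bar: "ffcomp delta_bar (Dbar_map eps_bar) = fid"
  by (simp add: ffcomp_def delta_bar_def eps_bar_def Dbar_map_def fid_def id_def Dshift_funpow comp_def)

lemma delta_bar_coassoc: "ffcomp delta_bar delta_bar = ffcomp delta_bar (Dbar_map delta_bar)"
  by (simp add: ffcomp_def delta_bar_def Dbar_map_def Dshift_funpow comp_def add.assoc)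

lemma functor_eq_refl: "functor_eq X F F"
  by (simp add: functor_eq_def)

theorem proposition3p25:
  fixes X :: "('o, 'a) clac_sig" and Y :: "('p, 'b) clac_sig" and Z :: "('q, 'c) clac_sig"
    and F :: "('o, 'a, 'p, 'b) cfunctor" and G :: "('p, 'b, 'q, 'c) cfunctor"
  assumes "is_clac X" and "is_clac Y" and "is_clac Z"
    and "clac_hom X Y F" and "clac_hom Y Z G"
  shows
    \<comment> \<open>D-bar is an endofunctor of CLAC\<close>
    "is_clac (Dbar X) \<and>
     clac_hom (Dbar X) (Dbar Y) (Dbar_map F) \<and>
     functor_eq (Dbar X) (Dbar_map fid) fid \<and>
     functor_eq (Dbar X) (Dbar_map (ffcomp F G)) (ffcomp (Dbar_map F) (Dbar_map G)) \<and>
    \<comment> \<open>epsilon-bar is a natural transformation D-bar => Id\<close>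
     clac_hom (Dbar X) X eps_bar \<and>
     functor_eq (Dbar X) (ffcomp (Dbar_map F) eps_bar) (ffcomp eps_bar F) \<and>
    \<comment> \<open>delta-bar is a natural transformation D-bar => D-bar D-bar\<close>
     clac_hom (Dbar X) (Dbar (Dbar X)) delta_bar \<and>
     functor_eq (Dbar X) (ffcomp (Dbar_map F) delta_bar) (ffcomp delta_bar (Dbar_map (Dbar_map F))) \<and>
    \<comment> \<open>comonad laws\<close>
     functor_eq (Dbar X) (ffcomp delta_bar eps_bar) fid \<and>
     functor_eq (Dbar X) (ffcomp delta_bar (Dbar_map eps_bar)) fid \<and>
     functor_eq (Dbar X) (ffcomp delta_bar delta_bar) (ffcomp delta_bar (Dbar_map delta_bar))"
proof -
  interpret X: clac X using assms(1) by (rule clac_if_is_clac)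
  interpret Y: clac Y using assms(2) by (rule clac_if_is_clac)
  interpret clac_morphism X Y F using assms(4) by unfold_locales
  show ?thesis
    using X.is_clac_Dbar Dbar_map_clac_hom X.eps_bar_clac_hom X.delta_bar_clac_hom
    by (simp add: functor_eq_refl Dbar_map_fid Dbar_map_ffcomp eps_bar_natural delta_bar_natural
        delta_bar_eps_bar delta_bar_Dbar_map_eps_bar delta_bar_coassoc)
qed

end
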